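(* Let $n\ge1$ and $\pi\in\mathfrak S_n$. For every tree $T_\sigma\in\mathrm{Orb}(T_\pi)$ (with $\sigma\in\mathfrak S_n$) one has $\mathrm{as}(\sigma)\ge \mathrm{leaf}(T_\pi)$, and there is exactly one tree $T_{\sigma}\in\mathrm{Orb}(T_\pi)$ with $\mathrm{as}(\sigma)=\mathrm{leaf}(T_\pi)$.
   Context: All trees are rooted binary trees in which each child of a node is designated as a left or a right child. For a finite totally ordered set $Y$, a min–max tree on $Y$ is such a tree whose nodes are labeled bijectively by $Y$ so that the label of each node is either the minimum or the maximum of the labels in its subtree. A node with at least one child is inner; an inner node is a min-node (resp. max-node) if its label is the minimum (resp. maximum) of the labels of its subtree. An HR-tree is a min–max tree in which every inner node $s$ has a nonempty right subtree containing the maximum label of the subtree of $s$ if $s$ is a min-node, and the minimum label of that subtree if $s$ is a max-node. The reading word $w(T)$ is the in-order reading $w(T)=w(L)\,\ell\,w(R)$ ($\ell$ the root label, $L,R$ the left and right subtrees). The map $T\mapsto w(T)$ is a bijection from HR-trees labeled by $[n]$ onto $\mathfrak S_n$; $T_\pi$ denotes the HR-tree with $w(T_\pi)=\pi$. $\mathrm{leaf}(T)$ is the number of leaves of $T$. HR-action: for $i\in[n]$ and an HR-tree $T_\pi$, let $v$ be the node labeled $\pi_i$. If $v$ is a leaf, $\psi_i(T_\pi)=T_\pi$. Otherwise let $R$ be the set consisting of $\pi_i$ and the labels of the right subtree of $v$; relabel the nodes of $v$ and its right subtree, keeping the shape, so that $v$ receives $\max R$ if $v$ is a min-node and $\min R$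 if $v$ is a max-node, and the nodes of the right subtree receive the remaining elements of $R$ by the order-preserving bijection from their old labels; all other labels are unchanged. The $\psi_i$ are pairwise commuting involutions on the set of HR-trees labeled by $[n]$, and $\mathrm{Orb}(T)$ denotes the set of all trees obtained from $T$ by compositions of the $\psi_i$. For $\pi\in\mathfrak S_n$, an alternating subsequence is a subsequence $\pi_{i_1}\pi_{i_2}\cdots\pi_{i_k}$ ($i_1<\dots<i_k$) with $\pi_{i_1}>\pi_{i_2}<\pi_{i_3}>\cdots$ (a single letter counts, with $k=1$); $\mathrm{as}(\pi)$ is the maximal length of an alternating subsequence. *)

theory Defs
  imports Main "HOL-Library.Tree" "HOL-Library.Sublist"
begin

(* Binary trees: HOL-Library Tree, where Leaf is the EMPTY tree and
   Node l a r is a node labelled a with left subtree l and right subtree r.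
   The reading word w(T) is inorder T. *)

fun hr_cond :: "nat tree \<Rightarrow> bool" where
  "hr_cond Leaf = True"
| "hr_cond (Node l a r) =
     (hr_cond l \<and> hr_cond r \<and>
      (let S = set_tree (Node l a r) in
        (l = Leaf \<and> r = Leaf) \<or>
        (r \<noteq> Leaf \<and>
          ((a = Min S \<and> Max S \<in> set_tree r) \<or> (a = Max S \<and> Min S \<in> set_tree r)))))"

definition hr_tree :: "nat \<Rightarrow> nat tree \<Rightarrow> bool" where
  "hr_tree n t \<longleftrightarrow> hr_cond t \<and> distinct (inorder t) \<and> set_tree t = {1..n}"

definition is_perm :: "nat \<Rightarrow> nat list \<Rightarrow> bool" where
  "is_perm n p \<longleftrightarrow> distinct p \<and> set p = {1..n}"

fun nleaf :: "'a tree \<Rightarrow> nat" where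
  "nleaf Leaf = 0"
| "nleaf (Node l a r) = (if l = Leaf \<and> r = Leaf then 1 else nleaf l + nleaf r)"

(* order-preserving bijection from finite A onto finite B (card A = card B) *)
definition relabel :: "nat set \<Rightarrow> nat set \<Rightarrow> nat \<Rightarrow> nat" where
  "relabel A B x = sorted_list_of_set B ! card {y \<in> A. y < x}"

fun root_move :: "nat tree \<Rightarrow> nat tree" where
  "root_move Leaf = Leaf"
| "root_move (Node l a r) =
     (if l = Leaf \<and> r = Leaf then Node l a r
      else (let R = insert a (set_tree r);
                b = (if a = Min (set_tree (Node l a r)) then Max R else Min R)
            in Node l b (map_tree (relabel (set_tree r) (R - {b})) r)))"

(* psi at in-order position i (0-based; psi_{i+1} of the paper) *)
fun psi :: "nat \<Rightarrow> nat tree \<Rightarrow> nat tree" where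
  "psi i Leaf = Leaf"
| "psi i (Node l a r) =
     (if i < size l then Node (psi i l) a r
      else if i = size l then root_move (Node l a r)
      else Node l a (psi (i - size l - 1) r))"

inductive_set orb :: "nat tree \<Rightarrow> nat tree set" for T where
  orb_refl: "T \<in> orb T"
| orb_step: "t \<in> orb T \<Longrightarrow> i < size T \<Longrightarrow> psi i t \<in> orb T"

definition alternating :: "nat list \<Rightarrow> bool" where
  "alternating xs \<longleftrightarrow>
     (\<forall>j. Suc j < length xs \<longrightarrow>
        (if even j then xs ! j > xs ! Suc j else xs ! j < xs ! Suc j))"

definition as_len :: "nat list \<Rightarrow> nat" where
  "as_len p = Max {length xs | xs. subseq xs p \<and> xs \<noteq> [] \<and> alternating xs}"

end

theory Submission
  imports Defs
begin

text \<open>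
  The maximal length of an alternating subsequence of a permutation is one more than its number
  of turning points (peaks and valleys) once a sentinel 0 is prepended.  The orbit of an HR-tree
  consists of the trees obtained by independently applying, or not, the root move at every node,
  i.e. by choosing which inner nodes are min-nodes and which are max-nodes.  As every label is an
  extreme value of its subtree, the turning points of the reading word can be counted along the
  tree: their number plus one equals the number of leaves plus a nonnegative excess, a sum of
  local defects at the nodes.  Hence the alternating length is at least the number of leaves,
  with equality iff the excess vanishes and the word does not start with a descent.  By induction
  on the tree, the orbit of a tree with at least two nodes contains exactly two trees of excess
  zero, one whose word starts with a descent and one whose word does not (and likewise for ending
  with an ascent).
\<close>

section \<open>Alternating subsequences and turning points\<close>

fun turns :: "nat list \<Rightarrow> nat" where
  "turns (a # b # c # r) = (if (a < b) = (b < c) then 0 else 1) + turns (b # c # r)"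
| "turns _ = 0"

fun alternates :: "bool \<Rightarrow> nat list \<Rightarrow> bool" where
  "alternates down (x # y # r) \<longleftrightarrow> (if down then y < x else x < y) \<and> alternates (\<not> down) (y # r)"
| "alternates _ _ \<longleftrightarrow> True"

lemma alternates_iff_nth:
  "alternates down xs \<longleftrightarrow>
     (\<forall>j. Suc j < length xs \<longrightarrow> (if even j = down then xs ! j > xs ! Suc j else xs ! j < xs ! Suc j))"
proof (induction down xs rule: alternates.induct)
  case (1 down x y r)
  have "(\<forall>j. Suc j < length (x # y # r) \<longrightarrow> (if even j = down then (x # y # r) ! j > (x # y # r) ! Suc j
            else (x # y # r) ! j < (x # y # r) ! Suc j)) \<longleftrightarrow>
        (if down then y < x else x < y) \<and>
        (\<forall>j. Suc j < length (y # r) \<longrightarrow> (if even j = (\<not> down) then (y # r) ! j > (y # r) ! Suc j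
            else (y # r) ! j < (y # r) ! Suc j))"
    by (auto simp: less_Suc_eq_0_disj nth_Cons split: nat.splits)
  with "1.IH" show ?case by simp
qed auto

lemma alternating_iff_alternates: "alternating xs \<longleftrightarrow> alternates True xs"
  by (simp add: alternating_def alternates_iff_nth)

lemma turns_alternates:
  "alternates (p < hd ys) ys \<Longrightarrow> ys \<noteq> [] \<Longrightarrow> turns (p # ys) + 1 = length ys"
proof (induction ys arbitrary: p)
  case (Cons y ys)
  show ?case
  proof (cases ys)
    case (Cons z r)
    with "Cons.prems" have "(p < y) \<noteq> (y < z)" "alternates (y < z) ys"
      by (auto split: if_splits)
    with "Cons.IH"[of y] Cons show ?thesis by simp
  qed simp
qed simp

lemma turns_Cons_Cons:
  "turns (a # b # l) = (if l = [] then 0 else if (a < b) = (b < hd l) then 0 else 1) + turns (b # l)"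
  by (cases l) auto

lemma subseq_alternates_turns:
  assumes "distinct (p # xs)" "xs \<noteq> []"
  shows "\<exists>ys. subseq ys xs \<and> ys \<noteq> [] \<and> length ys = turns (p # xs) + 1 \<and>
              alternates (p < hd ys) ys \<and> (p < hd ys \<longleftrightarrow> p < hd xs)"
  using assms
proof (induction xs arbitrary: p)
  case (Cons a xs)
  show ?case
  proof (cases xs)
    case Nil
    then show ?thesis by (intro exI[of _ "[a]"]) auto
  next
    case (Cons b r)
    obtain ys where ys: "subseq ys xs" "ys \<noteq> []" "length ys = turns (a # xs) + 1"
      "alternates (a < hd ys) ys" "a < hd ys \<longleftrightarrow> a < hd xs"
      using "Cons.IH"[of a] "Cons.prems" Cons by auto
    have "hd ys \<in> set xs"
      using list_emb_set[OF ys(1) hd_in_set[OF ys(2)]] by metis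
    then have "hd ys \<noteq> a" "hd ys \<noteq> p"
      using "Cons.prems"(1) by auto
    show ?thesis
    proof (cases "(p < a) = (a < b)")
      case False
      with ys Cons \<open>hd ys \<noteq> a\<close> show ?thesis
        by (intro exI[of _ "a # ys"]) (auto simp: neq_Nil_conv)
    next
      case True
      have "(p < hd ys) = (a < hd ys)"
        using True ys(5) \<open>hd ys \<noteq> a\<close> \<open>hd ys \<noteq> p\<close> Cons by auto
      with True ys Cons show ?thesis by (intro exI[of _ ys]) auto
    qed
  qed
qed simp

lemma turns_change_head:
  "ys \<noteq> [] \<Longrightarrow> turns (x # ys) \<le> (if (x < hd ys) = (y < hd ys) then 0 else 1) + turns (y # ys)"
  by (cases ys rule: turns.cases) (auto simp: turns_Cons_Cons split: if_splits)

lemma turns_subseq_le_strong: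
  "subseq ys xs \<Longrightarrow> ys \<noteq> [] \<Longrightarrow>
    turns (p # ys) + (if (p < hd ys) = (p < hd xs) then 0 else 1) \<le> turns (p # xs)"
proof (induction ys xs arbitrary: p rule: list_emb.induct)
  case (list_emb_Nil xs)
  then show ?case by simp
next
  case (list_emb_Cons ys xs y)
  then have "xs \<noteq> []" "turns (y # ys) + (if (y < hd ys) = (y < hd xs) then 0 else 1) \<le> turns (y # xs)"
    by auto
  moreover have "turns (p # ys) \<le> (if (p < hd ys) = (y < hd ys) then 0 else 1) + turns (y # ys)"
    using turns_change_head list_emb_Cons by auto
  moreover have "turns (p # y # xs) = (if (p < y) = (y < hd xs) then 0 else 1) + turns (y # xs)"
    using \<open>xs \<noteq> []\<close> by (simp add: turns_Cons_Cons)
  ultimately show ?case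
    by (auto split: if_splits)
next
  case (list_emb_Cons2 y y' ys xs)
  then have "y = y'"
    by simp
  show ?case
  proof (cases "ys = []")
    case False
    with list_emb_Cons2 \<open>y = y'\<close> have "xs \<noteq> []"
      "turns (y # ys) + (if (y < hd ys) = (y < hd xs) then 0 else 1) \<le> turns (y # xs)"
      by auto
    with False \<open>y = y'\<close> show ?thesis
      by (auto simp: turns_Cons_Cons split: if_splits)
  qed (use \<open>y = y'\<close> in \<open>simp add: turns_Cons_Cons\<close>)
qed

lemma turns_subseq_le: "subseq ys xs \<Longrightarrow> ys \<noteq> [] \<Longrightarrow> turns (p # ys) \<le> turns (p # xs)"
  using turns_subseq_le_strong[of ys xs p] by linarith

text \<open>
  With the sentinel 0 in front, the first letter counts as a turning point exactly when the word
  starts with a descent, as every alternating subsequence must.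
\<close>

lemma as_len_eq_turns:
  assumes "distinct w" "w \<noteq> []" "0 \<notin> set w"
  shows "as_len w = turns (0 # w) + 1"
proof -
  let ?M = "{length xs | xs. subseq xs w \<and> xs \<noteq> [] \<and> alternating xs}"
  have pos: "0 < hd xs" if "subseq xs w" "xs \<noteq> []" for xs
    using list_emb_set[OF that(1) hd_in_set[OF that(2)]] assms(3) by (metis neq0_conv)
  have fin: "finite ?M"
    by (rule finite_subset[of _ "{..length w}"]) (auto dest: list_emb_length)
  have bound: "k \<le> turns (0 # w) + 1" if "k \<in> ?M" for k
  proof -
    obtain xs where xs: "k = length xs" "subseq xs w" "xs \<noteq> []" "alternates True xs"
      using \<open>k \<in> ?M\<close> by (auto simp: alternating_iff_alternates)
    then have "turns (0 # xs) + 1 = length xs"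
      using pos turns_alternates[of 0 xs] by simp
    with xs turns_subseq_le[of xs w 0] show ?thesis by simp
  qed
  obtain ys where ys: "subseq ys w" "ys \<noteq> []" "length ys = turns (0 # w) + 1"
    "alternates (0 < hd ys) ys"
    using subseq_alternates_turns[of 0 w] assms by auto
  with pos have "alternating ys" by (simp add: alternating_iff_alternates)
  with ys have "turns (0 # w) + 1 \<in> ?M"
    unfolding ys(3)[symmetric] by blast
  then show ?thesis
    unfolding as_len_def using Max_eqI[OF fin bound] by blast
qed

section \<open>Order-preserving bijections between finite sets\<close>

lemma nth_sorted_list_of_set_card_less:
  assumes "finite A" "x \<in> A"
  shows "sorted_list_of_set A ! card {y \<in> A. y < x} = x"
proof -
  define xs where "xs = sorted_list_of_set A"
  have sorted: "sorted_wrt (<) xs" and set_xs: "set xs = A" and "distinct xs"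
    using assms(1) unfolding xs_def by auto
  obtain i where i: "i < length xs" "xs ! i = x"
    using assms(2) set_xs by (metis in_set_conv_nth)
  have split: "xs = take i xs @ x # drop (Suc i) xs"
    using i by (metis id_take_nth_drop)
  have "\<forall>y \<in> set (take i xs). y < x" "\<forall>y \<in> set (drop (Suc i) xs). x < y"
    using sorted split sorted_wrt_append[of "(<)" "take i xs" "x # drop (Suc i) xs"] by auto
  moreover have "A = set (take i xs) \<union> insert x (set (drop (Suc i) xs))"
    using set_xs split by (metis list.simps(15) set_append)
  ultimately have "{y \<in> A. y < x} = set (take i xs)"
    by auto
  moreover have "card (set (take i xs)) = i"
    using \<open>distinct xs\<close> i(1) by (simp add: distinct_card)
  ultimately show ?thesis
    using i unfolding xs_def by simp
qed

lemma relabel_eq: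
  assumes "finite A" "strict_mono_on A g" "g ` A = B" "x \<in> A"
  shows "relabel A B x = g x"
proof -
  have "{y \<in> B. y < g x} = g ` {y \<in> A. y < x}"
    using assms(2-4) strict_mono_on_less[OF assms(2)] by auto
  moreover have "inj_on g {y \<in> A. y < x}"
    using strict_mono_on_imp_inj_on[OF assms(2)] by (rule inj_on_subset) auto
  ultimately have "card {y \<in> B. y < g x} = card {y \<in> A. y < x}"
    by (simp add: card_image)
  then show ?thesis
    using nth_sorted_list_of_set_card_less[of B "g x"] assms unfolding relabel_def by auto
qed

lemma
  assumes "finite A" "finite B" "card A = card B"
  shows strict_mono_on_relabel: "strict_mono_on A (relabel A B)"
    and relabel_image: "relabel A B ` A = B"
proof -
  define xs where "xs = sorted_list_of_set B"
  have sorted: "sorted_wrt (<) xs" and "length xs = card B" "set xs = B"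
    using assms(2) unfolding xs_def by auto
  have rank_less: "card {y \<in> A. y < x} < length xs" if "x \<in> A" for x
    using assms(1,3) that \<open>length xs = card B\<close> by (metis (mono_tags) mem_Collect_eq
        order_less_irrefl psubset_card_mono subsetI psubsetI)
  show mono: "strict_mono_on A (relabel A B)"
  proof (rule strict_mono_onI)
    fix x y assume "x \<in> A" "y \<in> A" "x < y"
    then have "card {z \<in> A. z < x} < card {z \<in> A. z < y}"
      using assms(1) by (intro psubset_card_mono) auto
    with sorted rank_less[OF \<open>y \<in> A\<close>] show "relabel A B x < relabel A B y"
      unfolding relabel_def xs_def[symmetric] by (simp add: sorted_wrt_nth_less)
  qed
  have "relabel A B ` A \<subseteq> B"
    using rank_less \<open>set xs = B\<close> unfolding relabel_def xs_def[symmetric] by auto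
  moreover have "card (relabel A B ` A) = card B"
    using strict_mono_on_imp_inj_on[OF mono] assms(3) by (simp add: card_image)
  ultimately show "relabel A B ` A = B"
    using assms(2) by (simp add: card_subset_eq)
qed

lemma strict_mono_on_image_unique:
  fixes f g :: "nat \<Rightarrow> nat"
  assumes "finite A" "strict_mono_on A f" "strict_mono_on A g" "f ` A = g ` A" "x \<in> A"
  shows "f x = g x"
  using relabel_eq[OF assms(1,2) refl assms(5)] relabel_eq[OF assms(1,3) assms(4)[symmetric] assms(5)]
  by simp

lemma strict_mono_on_factor:
  fixes f k :: "nat \<Rightarrow> nat"
  assumes "finite A" "strict_mono_on A f" "strict_mono_on A k"
  obtains g where "strict_mono_on (f ` A) g" "\<And>x. x \<in> A \<Longrightarrow> g (f x) = k x"
proof -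
  let ?g = "relabel (f ` A) (k ` A)"
  have "card (f ` A) = card (k ` A)"
    using assms by (simp add: card_image strict_mono_on_imp_inj_on)
  then have g: "strict_mono_on (f ` A) ?g" "?g ` f ` A = k ` A"
    using assms(1) by (simp_all add: strict_mono_on_relabel relabel_image)
  then have "strict_mono_on A (?g \<circ> f)" "(?g \<circ> f) ` A = k ` A"
    using assms(2) by (auto simp: image_comp intro: monotone_on_o)
  then have "?g (f x) = k x" if "x \<in> A" for x
    using strict_mono_on_image_unique[OF assms(1) _ assms(3) _ that] by simp
  with g(1) show thesis
    by (rule that)
qed

section \<open>HR-trees\<close>

definition is_hr :: "nat tree \<Rightarrow> bool" where
  "is_hr t \<longleftrightarrow> hr_cond t \<and> distinct (inorder t)"

lemma is_hr_Leaf [simp]: "is_hr Leaf"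
  by (simp add: is_hr_def)

definition hr_root :: "nat tree \<Rightarrow> nat \<Rightarrow> nat tree \<Rightarrow> bool" where
  "hr_root l a r \<longleftrightarrow>
     (let S = set_tree (Node l a r) in
       (l = Leaf \<and> r = Leaf) \<or>
       (r \<noteq> Leaf \<and> ((a = Min S \<and> Max S \<in> set_tree r) \<or> (a = Max S \<and> Min S \<in> set_tree r))))"

lemma hr_cond_Node: "hr_cond (Node l a r) \<longleftrightarrow> hr_cond l \<and> hr_cond r \<and> hr_root l a r"
  by (simp only: hr_cond.simps hr_root_def)

lemma is_hr_Node:
  "is_hr (Node l a r) \<longleftrightarrow> is_hr l \<and> is_hr r \<and> hr_root l a r \<and>
     a \<notin> set_tree l \<and> a \<notin> set_tree r \<and> set_tree l \<inter> set_tree r = {}"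
  unfolding is_hr_def hr_cond_Node by auto

lemma hr_root_cong:
  assumes "set_tree l' = set_tree l" "set_tree r' = set_tree r"
  shows "hr_root l' a r' \<longleftrightarrow> hr_root l a r"
proof -
  have "l' = Leaf \<longleftrightarrow> l = Leaf" "r' = Leaf \<longleftrightarrow> r = Leaf"
    using assms eq_set_tree_empty by metis+
  with assms show ?thesis
    unfolding hr_root_def by simp
qed

lemma hr_root_Leaf: "hr_root l a Leaf \<longleftrightarrow> l = Leaf"
  by (simp add: hr_root_def)

lemma hr_root_extreme:
  assumes "hr_root l a r" "r \<noteq> Leaf"
  defines "S \<equiv> set_tree (Node l a r)"
  shows "(a = Min S \<and> Max S \<in> set_tree r) \<or> (a = Max S \<and> Min S \<in> set_tree r)"
  using assms(1,2) unfolding hr_root_def S_def Let_def by blast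

lemma is_hr_Node_subtrees:
  assumes "is_hr (Node l a r)" "is_hr l'" "is_hr r'"
    and "set_tree l' = set_tree l" "set_tree r' = set_tree r"
  shows "is_hr (Node l' a r')"
  using assms hr_root_cong[OF assms(4,5)] by (simp add: is_hr_Node)

lemma strict_mono_on_Min:
  fixes f :: "'a::linorder \<Rightarrow> 'b::linorder"
  assumes "finite S" "S \<noteq> {}" "strict_mono_on S f"
  shows "Min (f ` S) = f (Min S)"
proof (rule Min_eqI)
  fix y assume "y \<in> f ` S"
  then obtain x where "x \<in> S" "y = f x" by blast
  then show "f (Min S) \<le> y"
    using strict_mono_on_leD[OF assms(3)] Min_in[OF assms(1,2)] assms(1) by simp
qed (use assms in auto)

lemma strict_mono_on_Max:
  fixes f :: "'a::linorder \<Rightarrow> 'b::linorder"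
  assumes "finite S" "S \<noteq> {}" "strict_mono_on S f"
  shows "Max (f ` S) = f (Max S)"
proof (rule Max_eqI)
  fix y assume "y \<in> f ` S"
  then obtain x where "x \<in> S" "y = f x" by blast
  then show "y \<le> f (Max S)"
    using strict_mono_on_leD[OF assms(3)] Max_in[OF assms(1,2)] assms(1) by simp
qed (use assms in auto)

lemma hr_root_map_tree:
  assumes "strict_mono_on (set_tree (Node l a r)) f" "hr_root l a r"
  shows "hr_root (map_tree f l) (f a) (map_tree f r)"
proof -
  let ?S = "set_tree (Node l a r)"
  have "Min (f ` ?S) = f (Min ?S)" "Max (f ` ?S) = f (Max ?S)"
    using strict_mono_on_Min[OF _ _ assms(1)] strict_mono_on_Max[OF _ _ assms(1)] by simp_all
  then show ?thesis
    using assms unfolding hr_root_def by (auto simp: tree.set_map image_Un)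
qed

lemma is_hr_map_tree: "strict_mono_on (set_tree t) f \<Longrightarrow> is_hr t \<Longrightarrow> is_hr (map_tree f t)"
proof (induction t)
  case (Node l a r)
  have "strict_mono_on (set_tree l) f" "strict_mono_on (set_tree r) f"
    using Node.prems(1) by (auto intro: monotone_on_subset)
  then have "is_hr (map_tree f l)" "is_hr (map_tree f r)"
    using Node by (simp_all add: is_hr_Node)
  moreover have "inj_on f (set_tree (Node l a r))"
    using Node.prems(1) by (rule strict_mono_on_imp_inj_on)
  then have "f a \<notin> f ` set_tree l" "f a \<notin> f ` set_tree r" "f ` set_tree l \<inter> f ` set_tree r = {}"
    using Node.prems(2) unfolding is_hr_Node inj_on_def by auto
  ultimately show ?case
    using Node.prems hr_root_map_tree[OF Node.prems(1)] by (simp add: is_hr_Node tree.set_map)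
qed simp

section \<open>The root move\<close>

definition other_extreme :: "nat set \<Rightarrow> nat \<Rightarrow> nat" where
  "other_extreme S a = (if a = Min S then Max S else Min S)"

lemma other_extreme_hr:
  assumes "is_hr (Node l a r)" "r \<noteq> Leaf"
  defines "S \<equiv> set_tree (Node l a r)"
  shows "other_extreme S a \<in> set_tree r" "a \<noteq> Min S \<Longrightarrow> a = Max S" "Min S \<noteq> Max S"
proof -
  have "a \<notin> set_tree r"
    using assms(1) by (simp add: is_hr_Node)
  moreover have "(a = Min S \<and> Max S \<in> set_tree r) \<or> (a = Max S \<and> Min S \<in> set_tree r)"
    using hr_root_extreme[of l a r] assms(1,2) unfolding S_def is_hr_Node by metis
  ultimately show "other_extreme S a \<in> set_tree r" "a \<noteq> Min S \<Longrightarrow> a = Max S" "Min S \<noteq> Max S"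
    unfolding other_extreme_def by auto
qed

lemma other_extreme_other_extreme:
  "a = Min S \<or> a = Max S \<Longrightarrow> Min S \<noteq> Max S \<Longrightarrow> other_extreme S (other_extreme S a) = a"
  unfolding other_extreme_def by auto

lemma root_move_Node_eq:
  assumes "is_hr (Node l a r)" "r \<noteq> Leaf"
    and "b = other_extreme (set_tree (Node l a r)) a"
    and "strict_mono_on (set_tree r) f" "f ` set_tree r = insert a (set_tree r) - {b}"
  shows "root_move (Node l a r) = Node l b (map_tree f r)"
proof -
  let ?S = "set_tree (Node l a r)" and ?R = "insert a (set_tree r)"
  have "b \<in> set_tree r"
    using other_extreme_hr(1)[OF assms(1,2)] assms(3) by simp
  moreover have "Max ?R = Max ?S" if "Max ?S \<in> set_tree r"
    using that by (intro Max_eqI) (auto intro: Max_ge)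
  moreover have "Min ?R = Min ?S" if "Min ?S \<in> set_tree r"
    using that by (intro Min_eqI) (auto intro: Min_le)
  ultimately have "b = (if a = Min ?S then Max ?R else Min ?R)"
    using assms(3) unfolding other_extreme_def by (auto split: if_splits)
  moreover have "relabel (set_tree r) (?R - {b}) x = f x" if "x \<in> set_tree r" for x
    using relabel_eq[OF _ assms(4,5) that] by simp
  ultimately show ?thesis
    using assms(2) by (simp add: Let_def cong: tree.map_cong)
qed

lemma root_move_hr:
  assumes "is_hr (Node l a r)" "r \<noteq> Leaf"
  defines "b \<equiv> other_extreme (set_tree (Node l a r)) a"
  obtains f where "root_move (Node l a r) = Node l b (map_tree f r)"
    "strict_mono_on (set_tree r) f" "f ` set_tree r = insert a (set_tree r) - {b}"
proof -
  let ?f = "relabel (set_tree r) (insert a (set_tree r) - {b})"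
  have "a \<notin> set_tree r" "b \<in> set_tree r"
    using assms(1) other_extreme_hr(1)[OF assms(1,2)] unfolding b_def by (auto simp: is_hr_Node)
  then have "card (set_tree r) = card (insert a (set_tree r) - {b})"
    by simp
  then have "strict_mono_on (set_tree r) ?f" "?f ` set_tree r = insert a (set_tree r) - {b}"
    by (simp_all add: strict_mono_on_relabel relabel_image)
  with root_move_Node_eq[OF assms(1,2) b_def[THEN meta_eq_to_obj_eq]] that show ?thesis
    by blast
qed

lemma root_move_singleton [simp]: "root_move (Node Leaf a Leaf) = Node Leaf a Leaf"
  by simp

lemma is_hr_right_Leaf: "is_hr (Node l a r) \<Longrightarrow> r = Leaf \<Longrightarrow> l = Leaf"
  by (simp add: is_hr_Node hr_root_Leaf)

declare root_move.simps(2)[simp del]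

lemma set_tree_is_hr_root_move_Node:
  assumes "is_hr (Node l a r)" "r \<noteq> Leaf"
  shows "set_tree (root_move (Node l a r)) = set_tree (Node l a r) \<and> is_hr (root_move (Node l a r))"
proof -
  define S where "S = set_tree (Node l a r)"
  define b where "b = other_extreme S a"
  obtain f where t': "root_move (Node l a r) = Node l b (map_tree f r)"
    and f: "strict_mono_on (set_tree r) f" "f ` set_tree r = insert a (set_tree r) - {b}"
    using root_move_hr[OF assms] unfolding b_def S_def by blast
  note extreme = other_extreme_hr[OF assms, folded S_def]
  have "a \<notin> set_tree l" "set_tree l \<inter> set_tree r = {}" "is_hr l" "is_hr r" "a \<notin> set_tree r"
    using assms(1) by (auto simp: is_hr_Node)
  with extreme(1) f(2) have disj: "b \<notin> set_tree l" "set_tree l \<inter> f ` set_tree r = {}" "a \<noteq> b"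
    unfolding b_def by auto
  have set_eq: "set_tree (root_move (Node l a r)) = S"
    using extreme(1) f(2) unfolding t' S_def b_def by (auto simp: tree.set_map)
  have "(b = Min S \<and> Max S \<in> set_tree (map_tree f r)) \<or> (b = Max S \<and> Min S \<in> set_tree (map_tree f r))"
    using extreme(2,3) f(2) disj(3) unfolding b_def other_extreme_def by (auto simp: tree.set_map)
  then have "hr_root l b (map_tree f r)"
    using set_eq assms(2) unfolding hr_root_def t' by simp
  with f disj \<open>is_hr l\<close> \<open>is_hr r\<close> have "is_hr (root_move (Node l a r))"
    unfolding t' by (simp add: is_hr_Node is_hr_map_tree tree.set_map)
  with set_eq show ?thesis
    unfolding S_def by simp
qed

lemma
  assumes "is_hr t"
  shows set_tree_root_move: "set_tree (root_move t) = set_tree t"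
    and is_hr_root_move: "is_hr (root_move t)"
proof -
  have "set_tree (root_move t) = set_tree t \<and> is_hr (root_move t)"
  proof (cases t)
    case (Node l a r)
    with assms set_tree_is_hr_root_move_Node[of l a r] is_hr_right_Leaf[of l a r] show ?thesis
      by (cases "r = Leaf") simp_all
  qed simp
  then show "set_tree (root_move t) = set_tree t" "is_hr (root_move t)"
    by simp_all
qed

fun root_is_min :: "nat tree \<Rightarrow> bool" where
  "root_is_min Leaf \<longleftrightarrow> False"
| "root_is_min (Node l a r) \<longleftrightarrow> a = Min (set_tree (Node l a r))"

lemma root_is_min_root_move:
  assumes "is_hr (Node l a r)" "r \<noteq> Leaf"
  shows "root_is_min (root_move (Node l a r)) \<longleftrightarrow> \<not> root_is_min (Node l a r)"
proof -
  define S where "S = set_tree (Node l a r)"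
  obtain f where "root_move (Node l a r) = Node l (other_extreme S a) (map_tree f r)"
    using root_move_hr[OF assms] unfolding S_def by blast
  moreover have "set_tree (root_move (Node l a r)) = S"
    using set_tree_root_move[OF assms(1)] unfolding S_def .
  ultimately show ?thesis
    using other_extreme_hr(3)[OF assms] unfolding S_def other_extreme_def by auto
qed

lemma root_move_root_move:
  assumes "is_hr t"
  shows "root_move (root_move t) = t"
proof (cases t)
  case (Node l a r)
  then have hr: "is_hr (Node l a r)"
    using assms by simp
  show ?thesis
  proof (cases "r = Leaf")
    case False
    define S where "S = set_tree (Node l a r)"
    define b where "b = other_extreme S a"
    obtain f where t': "root_move (Node l a r) = Node l b (map_tree f r)"
      and f: "strict_mono_on (set_tree r) f" "f ` set_tree r = insert a (set_tree r) - {b}"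
      using root_move_hr[OF hr False] unfolding S_def b_def by blast
    obtain g where g: "strict_mono_on (f ` set_tree r) g" "\<And>x. x \<in> set_tree r \<Longrightarrow> g (f x) = x"
      using strict_mono_on_factor[OF finite_set_tree f(1) strict_mono_on_ident] by blast
    note extreme = other_extreme_hr[OF hr False, folded S_def]
    have "root_move (Node l b (map_tree f r)) = Node l a (map_tree g (map_tree f r))"
    proof (rule root_move_Node_eq)
      show "is_hr (Node l b (map_tree f r))"
        using is_hr_root_move[OF hr] t' by simp
      have "set_tree (Node l b (map_tree f r)) = S"
        using set_tree_root_move[OF hr] t' unfolding S_def by simp
      then show "a = other_extreme (set_tree (Node l b (map_tree f r))) b"
        using extreme(2,3) other_extreme_other_extreme unfolding b_def by metis
      have "a \<notin> set_tree r"
        using hr by (simp add: is_hr_Node)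
      moreover have "g ` f ` set_tree r = set_tree r"
        using g(2) by (force simp: image_image)
      ultimately show "g ` set_tree (map_tree f r) = insert b (set_tree (map_tree f r)) - {a}"
        using f(2) extreme(1) unfolding b_def by (auto simp: tree.set_map)
    qed (use False g(1) in \<open>simp_all add: tree.set_map\<close>)
    moreover have "map_tree g (map_tree f r) = r"
      using g(2) by (simp add: tree.map_comp tree.map_ident_strong)
    ultimately show ?thesis
      using t' Node by simp
  qed (use hr Node is_hr_right_Leaf[OF hr] in simp)
qed simp

lemma other_extreme_image:
  assumes "finite S" "S \<noteq> {}" "strict_mono_on S h" "a \<in> S"
  shows "other_extreme (h ` S) (h a) = h (other_extreme S a)"
proof -
  have "h a = h (Min S) \<longleftrightarrow> a = Min S"
    using strict_mono_on_eq[OF assms(3) assms(4) Min_in[OF assms(1,2)]] .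
  then show ?thesis
    using strict_mono_on_Min[OF assms(1-3)] strict_mono_on_Max[OF assms(1-3)]
    unfolding other_extreme_def by simp
qed

lemma root_move_map_tree:
  assumes "strict_mono_on (set_tree t) h" "is_hr t"
  shows "root_move (map_tree h t) = map_tree h (root_move t)"
proof (cases t)
  case (Node l a r)
  then have hr: "is_hr (Node l a r)"
    using assms by simp
  show ?thesis
  proof (cases "r = Leaf")
    case False
    define S where "S = set_tree (Node l a r)"
    define b where "b = other_extreme S a"
    obtain f where t': "root_move (Node l a r) = Node l b (map_tree f r)"
      and f: "strict_mono_on (set_tree r) f" "f ` set_tree r = insert a (set_tree r) - {b}"
      using root_move_hr[OF hr False] unfolding S_def b_def by blast
    have h: "strict_mono_on S h" "inj_on h S"
      using assms(1) Node strict_mono_on_imp_inj_on unfolding S_def by auto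
    have "set_tree r \<subseteq> S" "a \<in> S" "b \<in> S"
      using other_extreme_hr(1)[OF hr False] unfolding S_def b_def by auto
    moreover from this have "f ` set_tree r \<subseteq> S"
      using f(2) by auto
    ultimately have "strict_mono_on (set_tree r) h" "strict_mono_on (set_tree r) (h \<circ> f)"
      using h(1) f(1) by (auto intro: monotone_on_subset monotone_on_o)
    then obtain g where g: "strict_mono_on (h ` set_tree r) g"
      "\<And>x. x \<in> set_tree r \<Longrightarrow> g (h x) = h (f x)"
      using strict_mono_on_factor[of "set_tree r" h "h \<circ> f"] by auto
    have "root_move (Node (map_tree h l) (h a) (map_tree h r)) =
        Node (map_tree h l) (h b) (map_tree g (map_tree h r))"
    proof (rule root_move_Node_eq)
      show "is_hr (Node (map_tree h l) (h a) (map_tree h r))"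
        using is_hr_map_tree[OF assms(1,2)] Node by simp
      show "h b = other_extreme (set_tree (Node (map_tree h l) (h a) (map_tree h r))) (h a)"
        using other_extreme_image[OF _ _ h(1) \<open>a \<in> S\<close>] unfolding S_def b_def
        by (simp add: tree.set_map image_Un)
      have "g ` h ` set_tree r = h ` (insert a (set_tree r) - {b})"
        using g(2) f(2) by (simp add: image_image cong: image_cong flip: f(2))
      also have "\<dots> = h ` insert a (set_tree r) - h ` {b}"
        using \<open>set_tree r \<subseteq> S\<close> \<open>a \<in> S\<close> \<open>b \<in> S\<close> by (intro inj_on_image_set_diff[OF h(2)]) auto
      finally show "g ` set_tree (map_tree h r) = insert (h a) (set_tree (map_tree h r)) - {h b}"
        by (simp add: tree.set_map)
    qed (use False g(1) in \<open>simp_all add: tree.set_map\<close>)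
    moreover have "map_tree g (map_tree h r) = map_tree h (map_tree f r)"
      using g(2) by (simp add: tree.map_comp cong: tree.map_cong)
    ultimately show ?thesis
      using t' Node by simp
  qed (use hr Node is_hr_right_Leaf[OF hr] in simp)
qed simp

section \<open>The orbit\<close>

lemma nleaf_map_tree [simp]: "nleaf (map_tree f t) = nleaf t"
  by (induction t) auto

lemma size_root_move [simp]: "size (root_move t) = size t"
  and nleaf_root_move [simp]: "nleaf (root_move t) = nleaf t"
  by (cases t; simp add: root_move.simps Let_def)+

lemma size_psi [simp]: "size (psi i t) = size t"
  by (induction i t rule: psi.induct) auto

lemma psi_eq_Leaf_iff [simp]: "psi i t = Leaf \<longleftrightarrow> t = Leaf"
  by (metis eq_size_0 size_psi)

lemma
  assumes "is_hr t"
  shows is_hr_psi: "is_hr (psi i t)" and set_tree_psi: "set_tree (psi i t) = set_tree t"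
proof -
  have "is_hr (psi i t) \<and> set_tree (psi i t) = set_tree t"
    using assms
  proof (induction i t rule: psi.induct)
    case (2 i l a r)
    then have "is_hr l" "is_hr r"
      by (simp_all add: is_hr_Node)
    with 2 show ?case
      using is_hr_Node_subtrees[OF "2.prems"] is_hr_root_move set_tree_root_move by auto
  qed simp
  then show "is_hr (psi i t)" "set_tree (psi i t) = set_tree t"
    by simp_all
qed

lemma psi_map_tree:
  "strict_mono_on (set_tree t) h \<Longrightarrow> is_hr t \<Longrightarrow> psi i (map_tree h t) = map_tree h (psi i t)"
proof (induction i t rule: psi.induct)
  case (2 i l a r)
  have "strict_mono_on (set_tree l) h" "strict_mono_on (set_tree r) h" "is_hr l" "is_hr r"
    using "2.prems" by (auto simp: is_hr_Node intro: monotone_on_subset)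
  with 2 show ?case
    using root_move_map_tree[OF "2.prems"] by auto
qed simp

lemma psi_root_move_left:
  assumes "is_hr (Node l a r)" "i < size l"
  shows "psi i (root_move (Node l a r)) = root_move (Node (psi i l) a r)"
proof -
  have "r \<noteq> Leaf" "is_hr l"
    using assms is_hr_right_Leaf[OF assms(1)] by (auto simp: is_hr_Node)
  then obtain f where t': "root_move (Node l a r) = Node l (other_extreme (set_tree (Node l a r)) a) (map_tree f r)"
    and f: "strict_mono_on (set_tree r) f"
      "f ` set_tree r = insert a (set_tree r) - {other_extreme (set_tree (Node l a r)) a}"
    using root_move_hr[OF assms(1)] by blast
  have "is_hr (Node (psi i l) a r)"
    using is_hr_Node_subtrees[OF assms(1)] is_hr_psi set_tree_psi \<open>is_hr l\<close> assms(1)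
    by (simp add: is_hr_Node)
  with \<open>r \<noteq> Leaf\<close> f have "root_move (Node (psi i l) a r) =
      Node (psi i l) (other_extreme (set_tree (Node l a r)) a) (map_tree f r)"
    using set_tree_psi[OF \<open>is_hr l\<close>] by (intro root_move_Node_eq) auto
  with t' assms(2) show ?thesis
    by simp
qed

lemma psi_root_move_right:
  assumes "is_hr (Node l a r)" "r \<noteq> Leaf"
  shows "psi (Suc (size l + j)) (root_move (Node l a r)) = root_move (Node l a (psi j r))"
proof -
  have "is_hr r"
    using assms by (simp add: is_hr_Node)
  obtain f where t': "root_move (Node l a r) = Node l (other_extreme (set_tree (Node l a r)) a) (map_tree f r)"
    and f: "strict_mono_on (set_tree r) f"
      "f ` set_tree r = insert a (set_tree r) - {other_extreme (set_tree (Node l a r)) a}"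
    using root_move_hr[OF assms] by blast
  have "is_hr (Node l a (psi j r))"
    using is_hr_Node_subtrees[OF assms(1)] is_hr_psi set_tree_psi \<open>is_hr r\<close> assms(1)
    by (simp add: is_hr_Node)
  with assms(2) f have "root_move (Node l a (psi j r)) =
      Node l (other_extreme (set_tree (Node l a r)) a) (map_tree f (psi j r))"
    using set_tree_psi[OF \<open>is_hr r\<close>] by (intro root_move_Node_eq) auto
  with t' show ?thesis
    using psi_map_tree[OF f(1) \<open>is_hr r\<close>] by simp
qed

fun flips :: "nat tree \<Rightarrow> nat tree set" where
  "flips Leaf = {Leaf}"
| "flips (Node l a r) = (\<Union>l' \<in> flips l. \<Union>r' \<in> flips r. {Node l' a r', root_move (Node l' a r')})"

lemma flips_NodeI:
  assumes "l' \<in> flips l" "r' \<in> flips r"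
  shows "Node l' a r' \<in> flips (Node l a r)" and "root_move (Node l' a r') \<in> flips (Node l a r)"
  using assms by auto

lemma flips_NodeE:
  assumes "s \<in> flips (Node l a r)"
  obtains l' r' where "l' \<in> flips l" "r' \<in> flips r" "s = Node l' a r' \<or> s = root_move (Node l' a r')"
  using assms by auto

declare flips.simps(2) [simp del]

lemma flips_invariants:
  "s \<in> flips t \<Longrightarrow> is_hr t \<Longrightarrow>
     is_hr s \<and> set_tree s = set_tree t \<and> size s = size t \<and> nleaf s = nleaf t"
proof (induction t arbitrary: s)
  case (Node l a r)
  obtain l' r' where l': "l' \<in> flips l" and r': "r' \<in> flips r"
    and s: "s = Node l' a r' \<or> s = root_move (Node l' a r')"
    using Node.prems(1) by (rule flips_NodeE)
  have "is_hr l" "is_hr r"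
    using Node.prems(2) by (simp_all add: is_hr_Node)
  with Node.IH l' r' have sub: "is_hr l'" "is_hr r'" "set_tree l' = set_tree l" "set_tree r' = set_tree r"
    "size l' = size l" "size r' = size r" "nleaf l' = nleaf l" "nleaf r' = nleaf r"
    by blast+
  then have "is_hr (Node l' a r')"
    using is_hr_Node_subtrees[OF Node.prems(2)] by blast
  with sub show ?case
    using s is_hr_root_move set_tree_root_move by auto
qed simp

lemma self_in_flips: "t \<in> flips t"
  by (induction t) (auto intro: flips_NodeI)

lemma orb_size: "s \<in> orb t \<Longrightarrow> size s = size t"
  by (induction rule: orb.induct) auto

lemma orb_trans: "s \<in> orb t \<Longrightarrow> t \<in> orb u \<Longrightarrow> s \<in> orb u"
proof (induction rule: orb.induct)
  case (orb_step s i)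
  then show ?case
    using orb_size by (auto intro: orb.orb_step)
qed

lemma orb_Node_left: "l' \<in> orb l \<Longrightarrow> Node l' a r \<in> orb (Node l a r)"
proof (induction rule: orb.induct)
  case (orb_step l' i)
  then have "psi i (Node l' a r) \<in> orb (Node l a r)"
    by (intro orb.orb_step) auto
  with orb_step show ?case
    using orb_size by auto
qed (rule orb.orb_refl)

lemma orb_Node_right: "r' \<in> orb r \<Longrightarrow> Node l a r' \<in> orb (Node l a r)"
proof (induction rule: orb.induct)
  case (orb_step r' i)
  then have "psi (Suc (size l + i)) (Node l a r') \<in> orb (Node l a r)"
    by (intro orb.orb_step) auto
  then show ?case
    by simp
qed (rule orb.orb_refl)

lemma flips_subset_orb: "flips t \<subseteq> orb t"
proof (induction t)
  case (Node l a r)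
  have "Node l' a r' \<in> orb (Node l a r) \<and> root_move (Node l' a r') \<in> orb (Node l a r)"
    if "l' \<in> flips l" "r' \<in> flips r" for l' r'
  proof -
    have "Node l' a r' \<in> orb (Node l a r)"
      using that Node.IH orb_trans[OF orb_Node_right orb_Node_left] by blast
    moreover have "size l' = size l"
      using that(1) Node.IH orb_size by blast
    ultimately have "psi (size l) (Node l' a r') \<in> orb (Node l a r)"
      by (intro orb.orb_step) auto
    with \<open>size l' = size l\<close> \<open>Node l' a r' \<in> orb (Node l a r)\<close> show ?thesis
      by simp
  qed
  then show ?case
    by (auto elim: flips_NodeE)
qed (simp add: orb.orb_refl)

lemma psi_size_root_move:
  "psi (size l) (root_move (Node l a r)) = root_move (root_move (Node l a r))"
  by (simp add: root_move.simps Let_def)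

lemma psi_in_flips: "s \<in> flips t \<Longrightarrow> is_hr t \<Longrightarrow> psi i s \<in> flips t"
proof (induction t arbitrary: s i)
  case (Node l a r)
  obtain l' r' where l': "l' \<in> flips l" and r': "r' \<in> flips r"
    and s: "s = Node l' a r' \<or> s = root_move (Node l' a r')"
    using Node.prems(1) by (rule flips_NodeE)
  have "is_hr l" "is_hr r"
    using Node.prems(2) by (simp_all add: is_hr_Node)
  have "Node l' a r' \<in> flips (Node l a r)"
    using l' r' by (rule flips_NodeI)
  then have hr: "is_hr (Node l' a r')"
    using flips_invariants Node.prems(2) by blast
  have "size l' = size l"
    using flips_invariants[OF l' \<open>is_hr l\<close>] by blast
  consider "i < size l" | "i = size l" | j where "i = Suc (size l + j)"
    by (metis less_imp_Suc_add not_less_iff_gr_or_eq)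
  then show ?case
  proof cases
    case 1
    then have "psi i l' \<in> flips l"
      using Node.IH(1) l' \<open>is_hr l\<close> by blast
    with s 1 show ?thesis
      using r' psi_root_move_left[OF hr] \<open>size l' = size l\<close> by (auto intro: flips_NodeI)
  next
    case 2
    with s show ?thesis
      using l' r' psi_size_root_move[of l' a r'] root_move_root_move[OF hr] \<open>size l' = size l\<close>
      by (auto intro: flips_NodeI)
  next
    case 3
    then have "psi j r' \<in> flips r"
      using Node.IH(2) r' \<open>is_hr r\<close> by blast
    moreover have "r' = Leaf \<Longrightarrow> l' = Leaf"
      using is_hr_right_Leaf[OF hr] .
    ultimately show ?thesis
      using s 3 l' psi_root_move_right[OF hr] \<open>size l' = size l\<close>
      by (cases "r' = Leaf") (auto intro: flips_NodeI)
  qed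
qed simp

theorem orb_eq_flips:
  assumes "is_hr t"
  shows "orb t = flips t"
proof
  show "orb t \<subseteq> flips t"
  proof
    fix s assume "s \<in> orb t"
    then show "s \<in> flips t"
      using assms by induction (auto intro: self_in_flips psi_in_flips)
  qed
qed (rule flips_subset_orb)

section \<open>Counting turning points along the tree\<close>

definition starts_with_descent :: "nat list \<Rightarrow> bool" where
  "starts_with_descent w \<longleftrightarrow> (case w of a # b # _ \<Rightarrow> b < a | _ \<Rightarrow> False)"

definition ends_with_ascent :: "nat list \<Rightarrow> bool" where
  "ends_with_ascent w \<longleftrightarrow> starts_with_descent (rev w)"

lemma turns_append:
  "turns (xs @ y # ys) = turns (xs @ [y]) + turns (y # ys) +
     (if xs \<noteq> [] \<and> ys \<noteq> [] \<and> (last xs < y) \<noteq> (y < hd ys) then 1 else 0)"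
proof (induction xs rule: induct_list012)
  case (2 x)
  then show ?case by (cases ys) simp_all
next
  case (3 x1 x2 xs)
  have "hd (xs @ y # ys) = hd (xs @ [y])"
    by (cases xs) auto
  with 3 show ?case
    by (simp add: turns_Cons_Cons)
qed simp

lemma turns_Cons_extreme:
  assumes "distinct v" "\<forall>x \<in> set v. if m then c < x else x < c"
  shows "turns (c # v) = turns v + (if 2 \<le> length v \<and> starts_with_descent v = m then 1 else 0)"
  using assms by (cases v rule: turns.cases; cases m) (auto simp: starts_with_descent_def)

lemma turns_snoc_extreme:
  assumes "\<forall>x \<in> set u. if m then c < x else x < c"
  shows "turns (u @ [c]) = turns u + (if 2 \<le> length u \<and> ends_with_ascent u = m then 1 else 0)"
proof (cases u rule: rev_cases)
  case (snoc u' z)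
  with assms show ?thesis
    using turns_append[of u' z "[c]"]
    by (cases u' rule: rev_cases; cases m) (auto simp: ends_with_ascent_def starts_with_descent_def)
qed simp

lemma turns_insert_extreme:
  assumes "distinct v" "v \<noteq> []" "\<forall>x \<in> set u \<union> set v. if m then c < x else x < c"
  shows "turns (u @ c # v) = turns u + turns v + (if u = [] then 0 else 1)
    + (if 2 \<le> length u \<and> ends_with_ascent u = m then 1 else 0)
    + (if 2 \<le> length v \<and> starts_with_descent v = m then 1 else 0)"
proof -
  have "(last u < c) \<noteq> (c < hd v)" if "u \<noteq> []"
  proof -
    have "if m then c < last u else last u < c" "if m then c < hd v else hd v < c"
      using assms(3) last_in_set[OF that] hd_in_set[OF assms(2)] by blast+
    then show ?thesis
      by (cases m) auto
  qed
  then show ?thesis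
    using turns_append[of u c v] turns_snoc_extreme[of u m c] turns_Cons_extreme[of v m c] assms
    by auto
qed

lemma starts_with_descent_insert_extreme:
  assumes "v \<noteq> []" "\<forall>x \<in> set u \<union> set v. if m then c < x else x < c"
  shows "starts_with_descent (u @ c # v) =
    (if u = [] then \<not> m else if length u = 1 then m else starts_with_descent u)"
  using assms hd_in_set[OF assms(1)]
  by (cases u rule: turns.cases; cases v; cases m) (auto simp: starts_with_descent_def)

lemma ends_with_ascent_insert_extreme:
  assumes "v \<noteq> []" "\<forall>x \<in> set u \<union> set v. if m then c < x else x < c"
  shows "ends_with_ascent (u @ c # v) = (if length v = 1 then m else ends_with_ascent v)"
  using assms
  by (cases v rule: rev_cases; cases m)
     (auto simp: ends_with_ascent_def starts_with_descent_def split: list.splits)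

lemma turns_map: "strict_mono_on (set w) f \<Longrightarrow> turns (map f w) = turns w"
proof (induction w rule: turns.induct)
  case (1 a b c r)
  then have "strict_mono_on (set (b # c # r)) f"
    by (auto intro: monotone_on_subset)
  with 1 show ?case
    using strict_mono_on_less[OF "1.prems"] by simp
qed simp_all

lemma starts_with_descent_map:
  "strict_mono_on (set w) f \<Longrightarrow> starts_with_descent (map f w) = starts_with_descent w"
  by (cases w rule: turns.cases) (auto simp: starts_with_descent_def strict_mono_on_less)

lemma ends_with_ascent_map:
  "strict_mono_on (set w) f \<Longrightarrow> ends_with_ascent (map f w) = ends_with_ascent w"
  using starts_with_descent_map[of "rev w" f] by (simp add: ends_with_ascent_def rev_map)

definition turn_excess :: "nat tree \<Rightarrow> int" where
  "turn_excess t = (if t = Leaf then 0 else int (turns (inorder t)) + 1 - int (nleaf t))"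

lemma turn_excess_map_tree:
  "strict_mono_on (set_tree t) f \<Longrightarrow> turn_excess (map_tree f t) = turn_excess t"
  by (simp add: turn_excess_def inorder_map turns_map)

lemma root_extreme:
  assumes "is_hr (Node l a r)" "r \<noteq> Leaf"
  shows "\<forall>x \<in> set (inorder l) \<union> set (inorder r).
           if root_is_min (Node l a r) then a < x else x < a"
proof -
  define S where "S = set_tree (Node l a r)"
  have root: "root_is_min (Node l a r) \<longleftrightarrow> a = Min S" "a \<noteq> Min S \<Longrightarrow> a = Max S"
    using other_extreme_hr(2)[OF assms] unfolding S_def by simp_all
  show ?thesis
  proof
    fix x assume "x \<in> set (inorder l) \<union> set (inorder r)"
    then have "x \<in> S" "x \<noteq> a"
      using assms(1) unfolding S_def by (auto simp: is_hr_Node)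
    then have "Min S < x \<or> Min S = x" "x < Max S \<or> x = Max S"
      unfolding S_def by (metis Min_le Max_ge finite_set_tree order.order_iff_strict)+
    with root \<open>x \<noteq> a\<close> show "if root_is_min (Node l a r) then a < x else x < a"
      by auto
  qed
qed

lemma
  assumes "is_hr (Node l a r)" "r \<noteq> Leaf"
  defines "m \<equiv> root_is_min (Node l a r)"
  shows turn_excess_Node: "turn_excess (Node l a r) = turn_excess l + turn_excess r
      + (if 2 \<le> size l \<and> ends_with_ascent (inorder l) = m then 1 else 0)
      + (if 2 \<le> size r \<and> starts_with_descent (inorder r) = m then 1 else 0)"
    and starts_with_descent_Node: "starts_with_descent (inorder (Node l a r)) =
      (if l = Leaf then \<not> m else if size l = 1 then m else starts_with_descent (inorder l))"
    and ends_with_ascent_Node: "ends_with_ascent (inorder (Node l a r)) =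
      (if size r = 1 then m else ends_with_ascent (inorder r))"
proof -
  have "distinct (inorder r)" "inorder r \<noteq> []"
    using assms(1,2) by (simp_all add: is_hr_Node is_hr_def)
  note extreme = this root_extreme[OF assms(1,2), folded m_def]
  show "starts_with_descent (inorder (Node l a r)) =
      (if l = Leaf then \<not> m else if size l = 1 then m else starts_with_descent (inorder l))"
    using starts_with_descent_insert_extreme[OF extreme(2,3)] by simp
  show "ends_with_ascent (inorder (Node l a r)) = (if size r = 1 then m else ends_with_ascent (inorder r))"
    using ends_with_ascent_insert_extreme[OF extreme(2,3)] by simp
  show "turn_excess (Node l a r) = turn_excess l + turn_excess r
      + (if 2 \<le> size l \<and> ends_with_ascent (inorder l) = m then 1 else 0)
      + (if 2 \<le> size r \<and> starts_with_descent (inorder r) = m then 1 else 0)"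
    using turns_insert_extreme[OF extreme] assms(2) by (simp add: turn_excess_def)
qed

lemma turn_excess_nonneg: "is_hr t \<Longrightarrow> 0 \<le> turn_excess t"
proof (induction t)
  case (Node l a r)
  show ?case
  proof (cases "r = Leaf")
    case True
    with Node.prems show ?thesis
      using is_hr_right_Leaf[OF Node.prems] by (simp add: turn_excess_def)
  next
    case False
    with Node show ?thesis
      using turn_excess_Node[OF Node.prems False] by (simp add: is_hr_Node)
  qed
qed (simp add: turn_excess_def)

definition orient :: "bool \<Rightarrow> nat tree \<Rightarrow> nat tree" where
  "orient m t = (if root_is_min t = m then t else root_move t)"

lemma
  assumes "is_hr (Node l a r)" "r \<noteq> Leaf"
  shows turn_excess_orient: "turn_excess (orient m (Node l a r)) = turn_excess l + turn_excess r
      + (if 2 \<le> size l \<and> ends_with_ascent (inorder l) = m then 1 else 0)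
      + (if 2 \<le> size r \<and> starts_with_descent (inorder r) = m then 1 else 0)"
    and starts_with_descent_orient: "starts_with_descent (inorder (orient m (Node l a r))) =
      (if l = Leaf then \<not> m else if size l = 1 then m else starts_with_descent (inorder l))"
    and ends_with_ascent_orient: "ends_with_ascent (inorder (orient m (Node l a r))) =
      (if size r = 1 then m else ends_with_ascent (inorder r))"
proof -
  have "\<exists>b f. orient m (Node l a r) = Node l b (map_tree f r) \<and> is_hr (Node l b (map_tree f r))
      \<and> root_is_min (Node l b (map_tree f r)) = m \<and> strict_mono_on (set_tree r) f"
  proof (cases "root_is_min (Node l a r) = m")
    case True
    then show ?thesis
      using assms(1) strict_mono_on_id[of "set_tree r"]
      by (intro exI[of _ a] exI[of _ id]) (simp add: orient_def tree.map_id)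
  next
    case False
    obtain f where "root_move (Node l a r) = Node l (other_extreme (set_tree (Node l a r)) a) (map_tree f r)"
      "strict_mono_on (set_tree r) f"
      using root_move_hr[OF assms] by blast
    with False show ?thesis
      using is_hr_root_move[OF assms(1)] root_is_min_root_move[OF assms]
      by (intro exI[of _ "other_extreme (set_tree (Node l a r)) a"] exI[of _ f]) (simp add: orient_def)
  qed
  then obtain b f where t': "orient m (Node l a r) = Node l b (map_tree f r)"
    and hr: "is_hr (Node l b (map_tree f r))" and m: "root_is_min (Node l b (map_tree f r)) = m"
    and f: "strict_mono_on (set (inorder r)) f"
    by auto
  note Node = turn_excess_Node[OF hr, unfolded m] starts_with_descent_Node[OF hr, unfolded m]
    ends_with_ascent_Node[OF hr, unfolded m]
  show "turn_excess (orient m (Node l a r)) = turn_excess l + turn_excess r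
      + (if 2 \<le> size l \<and> ends_with_ascent (inorder l) = m then 1 else 0)
      + (if 2 \<le> size r \<and> starts_with_descent (inorder r) = m then 1 else 0)"
    "starts_with_descent (inorder (orient m (Node l a r))) =
      (if l = Leaf then \<not> m else if size l = 1 then m else starts_with_descent (inorder l))"
    "ends_with_ascent (inorder (orient m (Node l a r))) =
      (if size r = 1 then m else ends_with_ascent (inorder r))"
    using Node assms(2) f unfolding t'
    by (simp_all add: turn_excess_map_tree inorder_map starts_with_descent_map ends_with_ascent_map)
qed

section \<open>Trees of zero excess\<close>

definition zero_excess :: "nat tree \<Rightarrow> nat tree set" where
  "zero_excess t = {s \<in> flips t. turn_excess s = 0}"

lemma flips_Node_orient:
  "s \<in> flips (Node l a r) \<longleftrightarrow> (\<exists>m. \<exists>l' \<in> flips l. \<exists>r' \<in> flips r. s = orient m (Node l' a r'))"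
proof -
  have "{t, root_move t} = range (\<lambda>m. orient m t)" for t
    by (auto simp: orient_def)
  then have "flips (Node l a r) = (\<Union>l' \<in> flips l. \<Union>r' \<in> flips r. range (\<lambda>m. orient m (Node l' a r')))"
    by (simp add: flips.simps(2))
  then show ?thesis
    by blast
qed

lemma zero_excess_small:
  assumes "is_hr t" "size t \<le> 1"
  shows "zero_excess t = {t}"
proof (cases t)
  case (Node l a r)
  with assms have "l = Leaf" "r = Leaf"
    by auto
  with Node show ?thesis
    by (auto simp: zero_excess_def flips.simps(2) turn_excess_def)
qed (simp add: zero_excess_def turn_excess_def)

lemma turn_excess_orient_eq_0:
  assumes "is_hr (Node l a r)" "r \<noteq> Leaf" "l' \<in> flips l" "r' \<in> flips r"
  shows "turn_excess (orient m (Node l' a r')) = 0 \<longleftrightarrow> turn_excess l' = 0 \<and> turn_excess r' = 0 \<and>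
       \<not> (2 \<le> size l \<and> ends_with_ascent (inorder l') = m) \<and>
       \<not> (2 \<le> size r \<and> starts_with_descent (inorder r') = m)"
proof -
  have "is_hr l" "is_hr r"
    using assms(1) by (simp_all add: is_hr_Node)
  then have "size l' = size l" "size r' = size r" "is_hr l'" "is_hr r'"
    using assms(3,4) flips_invariants by blast+
  moreover have "is_hr (Node l' a r')"
    using flips_NodeI(1)[OF assms(3,4)] flips_invariants assms(1) by blast
  moreover from calculation have "r' \<noteq> Leaf"
    using assms(2) by (metis eq_size_0)
  ultimately show ?thesis
    using turn_excess_orient[of l' a r' m] turn_excess_nonneg[of l'] turn_excess_nonneg[of r'] by auto
qed

lemma zero_excess_Node:
  assumes "is_hr (Node l a r)" "r \<noteq> Leaf"
  shows "s \<in> zero_excess (Node l a r) \<longleftrightarrow>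
    (\<exists>m. \<exists>l' \<in> zero_excess l. \<exists>r' \<in> zero_excess r.
       \<not> (2 \<le> size l \<and> ends_with_ascent (inorder l') = m) \<and>
       \<not> (2 \<le> size r \<and> starts_with_descent (inorder r') = m) \<and> s = orient m (Node l' a r'))"
proof
  assume "s \<in> zero_excess (Node l a r)"
  then obtain m l' r' where l': "l' \<in> flips l" and r': "r' \<in> flips r"
    and s: "s = orient m (Node l' a r')" and "turn_excess s = 0"
    unfolding zero_excess_def flips_Node_orient by blast
  with turn_excess_orient_eq_0[OF assms l' r'] show "\<exists>m. \<exists>l' \<in> zero_excess l. \<exists>r' \<in> zero_excess r.
       \<not> (2 \<le> size l \<and> ends_with_ascent (inorder l') = m) \<and>
       \<not> (2 \<le> size r \<and> starts_with_descent (inorder r') = m) \<and> s = orient m (Node l' a r')"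
    unfolding zero_excess_def by blast
next
  assume "\<exists>m. \<exists>l' \<in> zero_excess l. \<exists>r' \<in> zero_excess r.
     \<not> (2 \<le> size l \<and> ends_with_ascent (inorder l') = m) \<and>
     \<not> (2 \<le> size r \<and> starts_with_descent (inorder r') = m) \<and> s = orient m (Node l' a r')"
  then obtain m l' r' where l': "l' \<in> flips l" "turn_excess l' = 0"
    and r': "r' \<in> flips r" "turn_excess r' = 0"
    and "\<not> (2 \<le> size l \<and> ends_with_ascent (inorder l') = m)"
      "\<not> (2 \<le> size r \<and> starts_with_descent (inorder r') = m)"
    and s: "s = orient m (Node l' a r')"
    unfolding zero_excess_def by blast
  with turn_excess_orient_eq_0[OF assms l'(1) r'(1)] have "turn_excess s = 0"
    by simp
  moreover have "s \<in> flips (Node l a r)"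
    using l'(1) r'(1) s unfolding flips_Node_orient by blast
  ultimately show "s \<in> zero_excess (Node l a r)"
    by (simp add: zero_excess_def)
qed

lemma zero_excess_choice:
  fixes P :: "nat tree \<Rightarrow> bool"
  assumes "is_hr t" "2 \<le> size t \<Longrightarrow> \<forall>e. \<exists>!s. s \<in> zero_excess t \<and> P s = e"
  shows "\<exists>C. \<forall>m s. s \<in> zero_excess t \<and> \<not> (2 \<le> size t \<and> P s = m) \<longleftrightarrow> s = C m"
proof -
  have unique: "\<exists>!s. s \<in> zero_excess t \<and> \<not> (2 \<le> size t \<and> P s = m)" for m
  proof (cases "2 \<le> size t")
    case True
    with assms(2) have "\<exists>!s. s \<in> zero_excess t \<and> P s = (\<not> m)"
      by blast
    with True show ?thesis
      by (metis (full_types))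
  next
    case False
    with zero_excess_small[OF assms(1)] show ?thesis
      by auto
  qed
  show ?thesis
  proof (intro exI allI iffI)
    fix m s
    show "s = (THE s. s \<in> zero_excess t \<and> \<not> (2 \<le> size t \<and> P s = m))"
      if "s \<in> zero_excess t \<and> \<not> (2 \<le> size t \<and> P s = m)"
      using the1_equality[OF unique that] by simp
    show "s \<in> zero_excess t \<and> \<not> (2 \<le> size t \<and> P s = m)"
      if "s = (THE s. s \<in> zero_excess t \<and> \<not> (2 \<le> size t \<and> P s = m))"
      using theI'[OF unique] that by simp
  qed
qed

lemma ex1_values_differ:
  fixes Q :: "'a \<Rightarrow> bool"
  assumes "\<forall>d. \<exists>!s. s \<in> Z \<and> Q s = d" "x \<in> Z" "y \<in> Z" "x \<noteq> y"
  shows "Q x \<noteq> Q y"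
proof
  assume "Q x = Q y"
  have "\<exists>!s. s \<in> Z \<and> Q s = Q x"
    using assms(1) by (rule spec)
  with \<open>Q x = Q y\<close> assms(2-4) show False
    by (metis the1_equality)
qed

lemma ex1_in_range_bool:
  fixes g :: "bool \<Rightarrow> 'a" and Q :: "'a \<Rightarrow> bool"
  assumes "Q (g True) \<noteq> Q (g False)"
  shows "\<exists>!s. s \<in> range g \<and> Q s = d"
  using assms by (cases d; cases "Q (g True)") (auto, (metis (full_types))+)

lemma zero_excess_in_flips: "s \<in> zero_excess t \<Longrightarrow> s \<in> flips t"
  by (simp add: zero_excess_def)

lemma zero_excess_Node_range:
  assumes "is_hr (Node l a r)" "r \<noteq> Leaf"
    and L: "\<And>m l'. l' \<in> zero_excess l \<and> \<not> (2 \<le> size l \<and> ends_with_ascent (inorder l') = m)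
      \<longleftrightarrow> l' = L m"
    and R: "\<And>m r'. r' \<in> zero_excess r \<and> \<not> (2 \<le> size r \<and> starts_with_descent (inorder r') = m)
      \<longleftrightarrow> r' = R m"
  shows "zero_excess (Node l a r) = range (\<lambda>m. orient m (Node (L m) a (R m)))"
proof (intro set_eqI iffI)
  fix s assume "s \<in> zero_excess (Node l a r)"
  then obtain m l' r' where l': "l' \<in> zero_excess l" "\<not> (2 \<le> size l \<and> ends_with_ascent (inorder l') = m)"
    and r': "r' \<in> zero_excess r" "\<not> (2 \<le> size r \<and> starts_with_descent (inorder r') = m)"
    and s: "s = orient m (Node l' a r')"
    using zero_excess_Node[OF assms(1,2)] by blast
  have "l' = L m" "r' = R m"
    using L[of l' m] R[of r' m] l' r' by blast+
  with s show "s \<in> range (\<lambda>m. orient m (Node (L m) a (R m)))"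
    by simp
next
  fix s assume "s \<in> range (\<lambda>m. orient m (Node (L m) a (R m)))"
  then obtain m where s: "s = orient m (Node (L m) a (R m))"
    by blast
  have "L m \<in> zero_excess l" "\<not> (2 \<le> size l \<and> ends_with_ascent (inorder (L m)) = m)"
    "R m \<in> zero_excess r" "\<not> (2 \<le> size r \<and> starts_with_descent (inorder (R m)) = m)"
    using L[of "L m" m] R[of "R m" m] by simp_all
  with s show "s \<in> zero_excess (Node l a r)"
    unfolding zero_excess_Node[OF assms(1,2)]
    by (intro exI[of _ m] bexI[of _ "L m"] bexI[of _ "R m"]) simp_all
qed

lemma orient_words_differ:
  assumes "is_hr (Node l a r)" "r \<noteq> Leaf" "\<And>m. L m \<in> flips l" "\<And>m. R m \<in> flips r"
    and "2 \<le> size l \<Longrightarrow> starts_with_descent (inorder (L True)) \<noteq> starts_with_descent (inorder (L False))"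
    and "2 \<le> size r \<Longrightarrow> ends_with_ascent (inorder (R True)) \<noteq> ends_with_ascent (inorder (R False))"
  shows "starts_with_descent (inorder (orient True (Node (L True) a (R True)))) \<noteq>
      starts_with_descent (inorder (orient False (Node (L False) a (R False))))"
    and "ends_with_ascent (inorder (orient True (Node (L True) a (R True)))) \<noteq>
      ends_with_ascent (inorder (orient False (Node (L False) a (R False))))"
proof -
  have "is_hr l" "is_hr r"
    using assms(1) by (simp_all add: is_hr_Node)
  then have sizes: "size (L m) = size l" "size (R m) = size r" for m
    using assms(3,4) flips_invariants by blast+
  have hr: "is_hr (Node (L m) a (R m))" for m
    using flips_NodeI(1)[OF assms(3,4)] flips_invariants assms(1) by blast
  have "L m = Leaf \<longleftrightarrow> l = Leaf" "R m \<noteq> Leaf" for m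
    using sizes assms(2) by (metis eq_size_0)+
  note orient = starts_with_descent_orient[OF hr this(2)] ends_with_ascent_orient[OF hr this(2)]
    sizes this(1)
  have two_le_size: "2 \<le> size t" if "t \<noteq> Leaf" "size t \<noteq> 1" for t :: "nat tree"
    using that by (cases "size t") auto
  show "starts_with_descent (inorder (orient True (Node (L True) a (R True)))) \<noteq>
      starts_with_descent (inorder (orient False (Node (L False) a (R False))))"
    using assms(5) two_le_size[of l] unfolding orient by auto
  show "ends_with_ascent (inorder (orient True (Node (L True) a (R True)))) \<noteq>
      ends_with_ascent (inorder (orient False (Node (L False) a (R False))))"
    using assms(2,6) two_le_size[of r] unfolding orient by auto
qed

lemma zero_excess_unique:
  assumes "is_hr t" "2 \<le> size t"
  shows "(\<forall>d. \<exists>!s. s \<in> zero_excess t \<and> starts_with_descent (inorder s) = d) \<and>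
         (\<forall>e. \<exists>!s. s \<in> zero_excess t \<and> ends_with_ascent (inorder s) = e)"
  using assms
proof (induction t)
  case (Node l a r)
  have "r \<noteq> Leaf"
    using Node.prems is_hr_right_Leaf[of l a r] by auto
  have "is_hr l" "is_hr r"
    using Node.prems(1) by (simp_all add: is_hr_Node)
  note IH_l = Node.IH(1)[OF \<open>is_hr l\<close>] and IH_r = Node.IH(2)[OF \<open>is_hr r\<close>]
  txt \<open>Once the root is oriented, each subtree has exactly one zero-excess choice compatible with it.\<close>
  have "\<exists>L. \<forall>m l'. l' \<in> zero_excess l \<and> \<not> (2 \<le> size l \<and> ends_with_ascent (inorder l') = m)
      \<longleftrightarrow> l' = L m"
    using conjunct2[OF IH_l] by (rule zero_excess_choice[OF \<open>is_hr l\<close>])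
  then obtain L where L: "\<forall>m l'. l' \<in> zero_excess l \<and> \<not> (2 \<le> size l \<and> ends_with_ascent (inorder l') = m)
      \<longleftrightarrow> l' = L m"
    by (elim exE)
  have "\<exists>R. \<forall>m r'. r' \<in> zero_excess r \<and> \<not> (2 \<le> size r \<and> starts_with_descent (inorder r') = m)
      \<longleftrightarrow> r' = R m"
    using conjunct1[OF IH_r] by (rule zero_excess_choice[OF \<open>is_hr r\<close>])
  then obtain R where R: "\<forall>m r'. r' \<in> zero_excess r \<and> \<not> (2 \<le> size r \<and> starts_with_descent (inorder r') = m)
      \<longleftrightarrow> r' = R m"
    by (elim exE)
  have L_m: "L m \<in> zero_excess l" "\<not> (2 \<le> size l \<and> ends_with_ascent (inorder (L m)) = m)"
    and R_m: "R m \<in> zero_excess r" "\<not> (2 \<le> size r \<and> starts_with_descent (inorder (R m)) = m)" for m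
    using L R by blast+
  have L_differ: "starts_with_descent (inorder (L True)) \<noteq> starts_with_descent (inorder (L False))"
    if "2 \<le> size l"
  proof (rule ex1_values_differ[OF conjunct1[OF IH_l[OF that]] L_m(1) L_m(1)])
    show "L True \<noteq> L False"
      using L_m(2)[of True] L_m(2)[of False] that by auto
  qed
  have R_differ: "ends_with_ascent (inorder (R True)) \<noteq> ends_with_ascent (inorder (R False))"
    if "2 \<le> size r"
  proof (rule ex1_values_differ[OF conjunct2[OF IH_r[OF that]] R_m(1) R_m(1)])
    show "R True \<noteq> R False"
      using R_m(2)[of True] R_m(2)[of False] that by auto
  qed
  note differ = orient_words_differ[OF Node.prems(1) \<open>r \<noteq> Leaf\<close>
      zero_excess_in_flips[OF L_m(1)] zero_excess_in_flips[OF R_m(1)] L_differ R_differ]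
  show ?case
    unfolding zero_excess_Node_range[OF Node.prems(1) \<open>r \<noteq> Leaf\<close> L[rule_format] R[rule_format]]
    using ex1_in_range_bool[where g = "\<lambda>m. orient m (Node (L m) a (R m))"
        and Q = "\<lambda>s. starts_with_descent (inorder s)"]
      ex1_in_range_bool[where g = "\<lambda>m. orient m (Node (L m) a (R m))"
        and Q = "\<lambda>s. ends_with_ascent (inorder s)"] differ
    by simp
qed simp

lemma as_len_flips:
  assumes "is_hr t" "0 \<notin> set_tree t" "t \<noteq> Leaf" "s \<in> flips t"
  shows "int (as_len (inorder s)) =
    turn_excess s + int (nleaf t) + (if starts_with_descent (inorder s) then 1 else 0)"
proof -
  have "is_hr s" "set_tree s = set_tree t" "nleaf s = nleaf t" "s \<noteq> Leaf"
    using flips_invariants[OF assms(4,1)] assms(3) by (auto simp flip: eq_set_tree_empty)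
  then have w: "distinct (inorder s)" "inorder s \<noteq> []" "\<forall>x \<in> set (inorder s). 0 < x"
    using assms(2) by (auto simp: is_hr_def intro!: gr0I)
  then have "as_len (inorder s) = turns (inorder s) + 1 +
      (if 2 \<le> length (inorder s) \<and> starts_with_descent (inorder s) then 1 else 0)"
    using as_len_eq_turns[of "inorder s"] turns_Cons_extreme[of "inorder s" True 0] by auto
  moreover have "starts_with_descent (inorder s) \<Longrightarrow> 2 \<le> length (inorder s)"
    by (auto simp: starts_with_descent_def simp flip: length_inorder split: list.splits)
  ultimately show ?thesis
    using \<open>nleaf s = nleaf t\<close> \<open>s \<noteq> Leaf\<close> by (auto simp: turn_excess_def)
qed

lemma
  assumes "is_hr t" "0 \<notin> set_tree t" "t \<noteq> Leaf" "s \<in> flips t"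
  shows nleaf_le_as_len: "nleaf t \<le> as_len (inorder s)"
    and as_len_eq_nleaf_iff:
      "as_len (inorder s) = nleaf t \<longleftrightarrow> s \<in> zero_excess t \<and> \<not> starts_with_descent (inorder s)"
proof -
  have "0 \<le> turn_excess s"
    using flips_invariants[OF assms(4,1)] turn_excess_nonneg by blast
  with as_len_flips[OF assms] assms(4)
  show "nleaf t \<le> as_len (inorder s)"
    "as_len (inorder s) = nleaf t \<longleftrightarrow> s \<in> zero_excess t \<and> \<not> starts_with_descent (inorder s)"
    by (auto simp: zero_excess_def split: if_splits)
qed

lemma ex1_zero_excess_no_descent:
  assumes "is_hr t" "t \<noteq> Leaf"
  shows "\<exists>!s. s \<in> zero_excess t \<and> \<not> starts_with_descent (inorder s)"
proof (cases "2 \<le> size t")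
  case True
  have "\<forall>d. \<exists>!s. s \<in> zero_excess t \<and> starts_with_descent (inorder s) = d"
    using zero_excess_unique[OF assms(1) True] by (rule conjunct1)
  then have "\<exists>!s. s \<in> zero_excess t \<and> starts_with_descent (inorder s) = False"
    by (rule spec)
  then show ?thesis
    by simp
next
  case False
  obtain l a r where t: "t = Node l a r"
    using assms(2) by (cases t) auto
  with False have "size l + size r = 0"
    by (simp only: tree.size(4))
  then have "l = Leaf" "r = Leaf"
    by simp_all
  with t zero_excess_small[OF assms(1)] show ?thesis
    by (intro ex1I[of _ t]) (auto simp: starts_with_descent_def)
qed

theorem mainTheorem2:
  fixes n :: nat and \<pi> :: "nat list" and T :: "nat tree"
  assumes "n \<ge> 1"
    and "is_perm n \<pi>"
    and "hr_tree n T" and "inorder T = \<pi>"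
  shows "(\<forall>S \<in> orb T. as_len (inorder S) \<ge> nleaf T)
       \<and> (\<exists>!S. S \<in> orb T \<and> as_len (inorder S) = nleaf T)"
proof -
  have hr: "is_hr T" and "0 \<notin> set_tree T" and "T \<noteq> Leaf"
    using assms(1,3) by (auto simp: hr_tree_def is_hr_def)
  note orbit = orb_eq_flips[OF hr]
  have "\<forall>S \<in> orb T. as_len (inorder S) \<ge> nleaf T"
    using nleaf_le_as_len[OF hr \<open>0 \<notin> set_tree T\<close> \<open>T \<noteq> Leaf\<close>] by (simp add: orbit)
  moreover have "S \<in> orb T \<and> as_len (inorder S) = nleaf T \<longleftrightarrow>
      S \<in> zero_excess T \<and> \<not> starts_with_descent (inorder S)" for S
    using as_len_eq_nleaf_iff[OF hr \<open>0 \<notin> set_tree T\<close> \<open>T \<noteq> Leaf\<close>, of S] zero_excess_in_flips[of S T]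
    unfolding orbit by blast
  then have "\<exists>!S. S \<in> orb T \<and> as_len (inorder S) = nleaf T"
    using ex1_zero_excess_no_descent[OF hr \<open>T \<noteq> Leaf\<close>] by simp
  ultimately show ?thesis
    by (intro conjI)
qed

end
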